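(* Let $x\in\mathbb{R}^n$, $k\ge1$ and $p\in(0,1]$. Suppose we subsample $x$ with probability $p$, i.e. each coordinate $i\in[n]$ is independently kept with probability $p$ and otherwise set to zero, and let $y$ be the resulting subsampled vector. Then with failure probability $e^{-\Omega(k)}$, $$\|y_{-2k}\|_2\le\sqrt{2p}\,\|x_{-k/p}\|_2 .$$
   Context: For a vector $v$ and $s\ge 0$, $v_{-s}$ denotes $v$ with its $s$ largest coordinates in absolute value zeroed out. *)

theory Defs
  imports "HOL-Probability.Probability"
begin

text \<open>Vectors in R^n are represented as functions nat => real; only the
coordinates in {..<n} matter.\<close>

definition l2norm :: "nat \<Rightarrow> (nat \<Rightarrow> real) \<Rightarrow> real" where
  "l2norm n x = sqrt (\<Sum>i<n. (x i)\<^sup>2)"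

definition top_set :: "nat \<Rightarrow> nat \<Rightarrow> (nat \<Rightarrow> real) \<Rightarrow> nat set" where
  "top_set n s x = (SOME T. T \<subseteq> {..<n} \<and> card T = min s n \<and>
      (\<forall>i\<in>T. \<forall>j\<in>{..<n} - T. \<bar>x j\<bar> \<le> \<bar>x i\<bar>))"

text \<open>x_{-s}: x with its s largest coordinates in absolute value zeroed out.\<close>
definition drop_top :: "nat \<Rightarrow> nat \<Rightarrow> (nat \<Rightarrow> real) \<Rightarrow> (nat \<Rightarrow> real)" where
  "drop_top n s x = (\<lambda>i. if i \<in> top_set n s x then 0 else x i)"

definition subsample_mask :: "nat \<Rightarrow> real \<Rightarrow> (nat \<Rightarrow> bool) pmf" where
  "subsample_mask n p = Pi_pmf {..<n} False (\<lambda>_. bernoulli_pmf p)"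

definition apply_mask :: "(nat \<Rightarrow> bool) \<Rightarrow> (nat \<Rightarrow> real) \<Rightarrow> (nat \<Rightarrow> real)" where
  "apply_mask S x = (\<lambda>i. if S i then x i else 0)"

end

theory Submission
  imports Defs "HOL-Analysis.Harmonic_Numbers"
begin

text \<open>
Order the coordinates by decreasing absolute value and let c(r) be the number of kept
coordinates among the r largest ones. Let m = \<lceil>k/p\<rceil>. If c(r) - 2k \<le> 2p(r - m) for all r
(truncated subtraction), then zeroing the first 2k kept coordinates of y leaves a mass which,
by Abel summation against the decreasing weights x_(r)^2, is at most
2p \<Sum>_(r \<ge> m) x_(r)^2 = 2p |x_(-m)|^2. By monotonicity of c it suffices to check this count
condition at the ends m + (J + 1)L of blocks of length L = \<lceil>k/(6p)\<rceil>. A Chernoff bound shows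
that the J-th check fails with probability at most e^(2 - k/6) e^(-Jk/18), and the union bound
over J gives a geometric series.
\<close>

lemma sum_le_sum_if_dominates:
  fixes f :: "'a \<Rightarrow> real"
  assumes fin: "finite R" "finite T" and card: "card R \<le> card T"
    and dom: "\<And>i j. i \<in> T \<Longrightarrow> j \<in> R - T \<Longrightarrow> f j \<le> f i"
    and nonneg: "\<And>i. i \<in> T \<Longrightarrow> 0 \<le> f i"
  shows "sum f R \<le> sum f T"
proof -
  have "card (R - T) \<le> card (T - R)"
    using fin card by (simp add: card_Diff_subset_Int Int_commute diff_le_mono)
  then obtain g where g: "g ` (R - T) \<subseteq> T - R" "inj_on g (R - T)"
    using card_le_inj[of "R - T" "T - R"] fin by auto
  have "sum f (R - T) \<le> sum (f \<circ> g) (R - T)"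
    using g(1) dom by (intro sum_mono) auto
  also have "\<dots> = sum f (g ` (R - T))"
    using g(2) by (simp add: sum.reindex)
  also have "\<dots> \<le> sum f (T - R)"
    using g(1) fin nonneg by (intro sum_mono2) auto
  finally show ?thesis
    using fin by (simp add: sum.Int_Diff[of R f T] sum.Int_Diff[of T f R] Int_commute)
qed

lemma summation_by_parts:
  fixes d v :: "nat \<Rightarrow> 'a::comm_ring"
  shows "(\<Sum>j<n. d j * v j)
           = (\<Sum>j<n. (\<Sum>i<Suc j. d i) * (v j - v (Suc j))) + (\<Sum>i<n. d i) * v n"
  by (induction n) (simp_all add: algebra_simps)

lemma sum_mult_le_sum_mult_if_prefix_sums_le:
  fixes u v w :: "nat \<Rightarrow> 'a::linordered_idom"
  assumes antimono: "\<And>j. j < n \<Longrightarrow> v (Suc j) \<le> v j" and nonneg: "0 \<le> v n"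
    and prefix: "\<And>r. r \<le> n \<Longrightarrow> (\<Sum>j<r. w j) \<le> (\<Sum>j<r. u j)"
  shows "(\<Sum>j<n. w j * v j) \<le> (\<Sum>j<n. u j * v j)"
proof -
  define d where "d j = u j - w j" for j
  have d: "0 \<le> (\<Sum>i<r. d i)" if "r \<le> n" for r
    using prefix[OF that] by (simp add: d_def sum_subtractf)
  have "0 \<le> (\<Sum>j<n. (\<Sum>i<Suc j. d i) * (v j - v (Suc j))) + (\<Sum>i<n. d i) * v n"
  proof (intro add_nonneg_nonneg sum_nonneg)
    fix j assume "j \<in> {..<n}"
    then show "0 \<le> (\<Sum>i<Suc j. d i) * (v j - v (Suc j))"
      using d[of "Suc j"] antimono[of j] by (intro mult_nonneg_nonneg) auto
  qed (use d[OF order.refl] nonneg in \<open>rule mult_nonneg_nonneg\<close>)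
  then have "0 \<le> (\<Sum>j<n. d j * v j)"
    by (simp only: summation_by_parts[of d v n])
  then show ?thesis
    by (simp only: d_def left_diff_distrib sum_subtractf diff_ge_0_iff_ge)
qed

lemma excess_le_if_le_at_block_ends:
  fixes c :: "nat \<Rightarrow> nat" and a :: real
  assumes mono: "mono c" and L: "0 < L" and a: "0 \<le> a"
    and block: "\<And>J. real (c (m + (J + 1) * L)) \<le> real K + a * real (J * L)"
  shows "real (c r - K) \<le> a * real (r - m)"
proof -
  define J where "J = (r - m - 1) div L"
  have "J * L + (r - m - 1) mod L = r - m - 1" "(r - m - 1) mod L < L"
    unfolding J_def using L by simp_all
  then have r: "r \<le> m + (J + 1) * L" and JL: "J * L \<le> r - m"
    by (simp_all add: algebra_simps)
  have "real (c r) \<le> real (c (m + (J + 1) * L))"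
    using monoD[OF mono r] by simp
  also have "\<dots> \<le> real K + a * real (J * L)"
    by (rule block)
  also have "\<dots> \<le> real K + a * real (r - m)"
    using JL a by (intro add_left_mono mult_left_mono) (simp_all only: of_nat_le_iff)
  finally have bound: "real (c r) \<le> real K + a * real (r - m)" .
  show ?thesis
  proof (cases "c r \<le> K")
    case False
    then have "real (c r - K) = real (c r) - real K"
      by simp
    with bound show ?thesis
      by linarith
  qed (use a in simp)
qed

lemma mult_nat_ceiling_divide_bounds:
  fixes a p :: real
  assumes "0 < p" "p \<le> 1" "0 \<le> a"
  shows "a \<le> p * nat \<lceil>a / p\<rceil>" and "p * nat \<lceil>a / p\<rceil> \<le> a + 1"
proof -
  have c: "a / p \<le> nat \<lceil>a / p\<rceil>" "nat \<lceil>a / p\<rceil> \<le> a / p + 1"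
    using assms by (simp_all add: of_nat_ceiling)
  show "a \<le> p * nat \<lceil>a / p\<rceil>"
    using mult_left_mono[OF c(1), of p] assms by simp
  have "p * nat \<lceil>a / p\<rceil> \<le> p * (a / p + 1)"
    using mult_left_mono[OF c(2), of p] assms by simp
  also have "\<dots> \<le> a + 1"
    using assms by (simp add: field_simps)
  finally show "p * nat \<lceil>a / p\<rceil> \<le> a + 1" .
qed

section \<open>Top sets and the decreasing order of coordinates\<close>

definition is_top_set :: "nat \<Rightarrow> nat \<Rightarrow> (nat \<Rightarrow> real) \<Rightarrow> nat set \<Rightarrow> bool" where
  "is_top_set n s x T \<longleftrightarrow> T \<subseteq> {..<n} \<and> card T = min s n \<and>
      (\<forall>i\<in>T. \<forall>j\<in>{..<n} - T. \<bar>x j\<bar> \<le> \<bar>x i\<bar>)"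

lemma sum_sq_compl_top_set_le:
  assumes top: "is_top_set n s x T" and R: "R \<subseteq> {..<n}" "card R \<le> s"
  shows "(\<Sum>i\<in>{..<n} - T. (x i)\<^sup>2) \<le> (\<Sum>i\<in>{..<n} - R. (x i)\<^sup>2)"
proof -
  have T: "T \<subseteq> {..<n}" "card T = min s n"
    and dom: "\<And>i j. i \<in> T \<Longrightarrow> j \<in> {..<n} - T \<Longrightarrow> \<bar>x j\<bar> \<le> \<bar>x i\<bar>"
    using top by (auto simp: is_top_set_def)
  have fin: "finite R" "finite T"
    using R(1) T(1) finite_subset by auto
  have "card R \<le> n"
    using card_mono[OF _ R(1)] by simp
  then have "(\<Sum>i\<in>R. (x i)\<^sup>2) \<le> (\<Sum>i\<in>T. (x i)\<^sup>2)"
    using fin R T dom by (intro sum_le_sum_if_dominates) (auto simp: abs_le_square_iff)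
  then show ?thesis
    using R T by (simp add: sum_diff)
qed

lemma l2norm_drop_top_sq:
  "(l2norm n (drop_top n s x))\<^sup>2 = (\<Sum>i\<in>{..<n} - top_set n s x. (x i)\<^sup>2)"
proof -
  have "(l2norm n (drop_top n s x))\<^sup>2 = (\<Sum>i<n. (drop_top n s x i)\<^sup>2)"
    unfolding l2norm_def by (simp add: sum_nonneg)
  also have "\<dots> = (\<Sum>i\<in>{..<n} - top_set n s x. (x i)\<^sup>2)"
    by (rule sum.mono_neutral_cong_right) (auto simp: drop_top_def)
  finally show ?thesis .
qed

lemma l2norm_nonneg: "0 \<le> l2norm n x"
  by (simp add: l2norm_def sum_nonneg)

definition abs_desc_order :: "nat \<Rightarrow> (nat \<Rightarrow> real) \<Rightarrow> nat list" where
  "abs_desc_order n x = sort_key (\<lambda>i. - \<bar>x i\<bar>) [0..<n]"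

definition leading_coords :: "nat \<Rightarrow> (nat \<Rightarrow> real) \<Rightarrow> nat \<Rightarrow> nat set" where
  "leading_coords n x r = set (take r (abs_desc_order n x))"

lemma length_abs_desc_order [simp]: "length (abs_desc_order n x) = n"
  by (simp add: abs_desc_order_def)

lemma distinct_abs_desc_order: "distinct (abs_desc_order n x)"
  by (simp add: abs_desc_order_def)

lemma set_abs_desc_order: "set (abs_desc_order n x) = {..<n}"
  by (auto simp: abs_desc_order_def)

lemma inj_on_nth_abs_desc_order: "inj_on ((!) (abs_desc_order n x)) {..<n}"
  by (simp add: inj_on_nth distinct_abs_desc_order)

lemma image_nth_abs_desc_order: "(!) (abs_desc_order n x) ` {..<n} = {..<n}"
  using nth_image[of n "abs_desc_order n x"] by (simp add: atLeast0LessThan set_abs_desc_order)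

lemma abs_nth_abs_desc_order_antimono:
  assumes "a \<le> b" "b < n"
  shows "\<bar>x (abs_desc_order n x ! b)\<bar> \<le> \<bar>x (abs_desc_order n x ! a)\<bar>"
proof -
  have "sorted (map (\<lambda>i. - \<bar>x i\<bar>) (abs_desc_order n x))"
    by (simp add: abs_desc_order_def)
  from sorted_nth_mono[OF this assms(1)] assms show ?thesis
    by simp
qed

lemma leading_coords_eq_image: "leading_coords n x r = (!) (abs_desc_order n x) ` {..<min r n}"
  using nth_image[of "min r n" "abs_desc_order n x"]
  by (cases "r \<le> n") (simp_all add: leading_coords_def atLeast0LessThan min_def)

lemma nth_abs_desc_order_in_leading_coords_iff:
  assumes "j < n"
  shows "abs_desc_order n x ! j \<in> leading_coords n x r \<longleftrightarrow> j < r"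
  using assms inj_on_nth_abs_desc_order[of n x]
  by (auto simp: leading_coords_eq_image inj_on_image_mem_iff)

lemma leading_coords_subset: "leading_coords n x r \<subseteq> {..<n}"
  using set_take_subset[of r "abs_desc_order n x"]
  by (simp add: leading_coords_def set_abs_desc_order)

lemma card_leading_coords: "card (leading_coords n x r) = min r n"
  by (simp add: leading_coords_def distinct_card distinct_abs_desc_order)

lemma is_top_set_leading_coords: "is_top_set n s x (leading_coords n x s)"
  unfolding is_top_set_def
proof (intro conjI ballI)
  show "leading_coords n x s \<subseteq> {..<n}" "card (leading_coords n x s) = min s n"
    by (rule leading_coords_subset) (rule card_leading_coords)
  fix i j assume i: "i \<in> leading_coords n x s" and j: "j \<in> {..<n} - leading_coords n x s"
  obtain a where a: "a < s" "a < n" "i = abs_desc_order n x ! a"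
    using i by (auto simp: leading_coords_eq_image)
  obtain b where b: "b < n" "j = abs_desc_order n x ! b"
    using j image_nth_abs_desc_order[of n x] by (metis DiffD1 imageE lessThan_iff)
  have "s \<le> b"
    using j b nth_abs_desc_order_in_leading_coords_iff[OF b(1)] by auto
  then show "\<bar>x j\<bar> \<le> \<bar>x i\<bar>"
    using a b abs_nth_abs_desc_order_antimono[of a b n x] by simp
qed

lemma is_top_set_top_set: "is_top_set n s x (top_set n s x)"
  unfolding top_set_def is_top_set_def[symmetric]
  using is_top_set_leading_coords by (rule someI)

section \<open>Kept coordinates among the leading ones\<close>

lemma leading_coords_Suc:
  "leading_coords n x (Suc r) =
     (if r < n then insert (abs_desc_order n x ! r) (leading_coords n x r) else leading_coords n x r)"
  by (simp add: leading_coords_def take_Suc_conv_app_nth take_all)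

definition kept_count :: "nat \<Rightarrow> (nat \<Rightarrow> real) \<Rightarrow> (nat \<Rightarrow> bool) \<Rightarrow> nat \<Rightarrow> nat" where
  "kept_count n x S r = card {i \<in> leading_coords n x r. S i}"

lemma kept_count_0 [simp]: "kept_count n x S 0 = 0"
  by (simp add: kept_count_def leading_coords_def)

lemma kept_count_Suc:
  "kept_count n x S (Suc r) =
     kept_count n x S r + (if r < n \<and> S (abs_desc_order n x ! r) then 1 else 0)"
proof -
  have fin: "finite {i \<in> leading_coords n x r. S i}"
    by (simp add: leading_coords_def)
  have "abs_desc_order n x ! r \<notin> leading_coords n x r" if "r < n"
    using nth_abs_desc_order_in_leading_coords_iff[OF that] by simp
  then show ?thesis
    using fin by (auto simp: kept_count_def leading_coords_Suc Collect_conj_eq insert_Collect)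
qed

lemma kept_count_mono: "mono (kept_count n x S)"
  unfolding kept_count_def leading_coords_def
  by (intro monoI card_mono) (auto dest: set_take_subset_set_take)

lemma kept_count_le: "kept_count n x S r \<le> n"
  using card_mono[of "{..<n}" "{i \<in> leading_coords n x r. S i}"] leading_coords_subset[of n x r]
  by (auto simp: kept_count_def)

lemma sum_kept_beyond_count_eq:
  "(\<Sum>j<r. if j < n \<and> S (abs_desc_order n x ! j) \<and> K \<le> kept_count n x S j then 1 else 0)
     = real (kept_count n x S r - K)"
  by (induction r) (auto simp: kept_count_Suc of_nat_diff)

lemma card_first_kept_positions_le:
  "card {j. j < n \<and> S (abs_desc_order n x ! j) \<and> kept_count n x S j < K} \<le> K"
proof -
  let ?P = "{j. j < n \<and> S (abs_desc_order n x ! j) \<and> kept_count n x S j < K}"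
  have strict: "kept_count n x S i < kept_count n x S j" if "i \<in> ?P" "i < j" for i j
  proof -
    have "kept_count n x S i < kept_count n x S (Suc i)"
      using that by (simp add: kept_count_Suc)
    also have "\<dots> \<le> kept_count n x S j"
      using that(2) kept_count_mono by (simp add: monoD)
    finally show ?thesis .
  qed
  have "inj_on (kept_count n x S) ?P"
  proof (rule inj_onI)
    fix i j assume "i \<in> ?P" "j \<in> ?P" "kept_count n x S i = kept_count n x S j"
    with strict[of i j] strict[of j i] show "i = j"
      by (cases i j rule: linorder_cases) auto
  qed
  then have "card ?P \<le> card {..<K}"
    by (rule card_inj_on_le) auto
  then show ?thesis
    by simp
qed

lemma sum_compl_image_abs_desc_order:
  assumes "P \<subseteq> {..<n}"
  shows "(\<Sum>i\<in>{..<n} - (!) (abs_desc_order n x) ` P. f i)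
           = (\<Sum>j\<in>{..<n} - P. f (abs_desc_order n x ! j))"
proof -
  have inj: "inj_on ((!) (abs_desc_order n x)) {..<n}"
    by (rule inj_on_nth_abs_desc_order)
  have "{..<n} - (!) (abs_desc_order n x) ` P = (!) (abs_desc_order n x) ` ({..<n} - P)"
    using inj_on_image_set_diff[OF inj _ assms] image_nth_abs_desc_order[of n x] by simp
  then show ?thesis
    using inj by (simp add: sum.reindex inj_on_diff)
qed

lemma l2norm_drop_top_apply_mask_sq_le:
  assumes p: "0 \<le> p"
    and count: "\<And>r. real (kept_count n x S r - K) \<le> 2 * p * real (r - m)"
  shows "(l2norm n (drop_top n K (apply_mask S x)))\<^sup>2 \<le> 2 * p * (l2norm n (drop_top n m x))\<^sup>2"
proof -
  define \<sigma> where "\<sigma> = abs_desc_order n x"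
  define y where "y = apply_mask S x"
  define v where "v j = (if j < n then (x (\<sigma> ! j))\<^sup>2 else 0)" for j
  define w where "w j = (if j < n \<and> S (\<sigma> ! j) \<and> K \<le> kept_count n x S j then 1 else 0 :: real)" for j
  define u where "u j = (if m \<le> j then 2 * p else 0)" for j
  txt \<open>The positions of the first K kept coordinates; removing them from y is no better than
    removing its K largest coordinates.\<close>
  define P where "P = {j. j < n \<and> S (\<sigma> ! j) \<and> kept_count n x S j < K}"
  have P: "P \<subseteq> {..<n}" "card ((!) \<sigma> ` P) \<le> K"
    using card_image_le[of P "(!) \<sigma>"] card_first_kept_positions_le[of n S x K]
    by (auto simp: P_def \<sigma>_def)
  have "(l2norm n (drop_top n K y))\<^sup>2 \<le> (\<Sum>i\<in>{..<n} - (!) \<sigma> ` P. (y i)\<^sup>2)"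
    unfolding l2norm_drop_top_sq
    using P image_mono[OF P(1), of "(!) \<sigma>"] image_nth_abs_desc_order[of n x]
    by (intro sum_sq_compl_top_set_le[OF is_top_set_top_set]) (auto simp: \<sigma>_def)
  also have "\<dots> = (\<Sum>j\<in>{..<n} - P. (y (\<sigma> ! j))\<^sup>2)"
    unfolding \<sigma>_def by (rule sum_compl_image_abs_desc_order[OF P(1)])
  also have "\<dots> = (\<Sum>j<n. w j * v j)"
    by (rule sum.mono_neutral_cong_left) (auto simp: P_def w_def v_def y_def apply_mask_def)
  also have "\<dots> \<le> (\<Sum>j<n. u j * v j)"
  proof (rule sum_mult_le_sum_mult_if_prefix_sums_le)
    fix r
    have "(\<Sum>j<r. w j) = real (kept_count n x S r - K)"
      unfolding w_def \<sigma>_def by (rule sum_kept_beyond_count_eq)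
    also have "\<dots> \<le> 2 * p * real (r - m)"
      by (rule count)
    also have "\<dots> = (\<Sum>j<r. u j)"
      by (induction r) (auto simp: u_def algebra_simps Suc_diff_le)
    finally show "(\<Sum>j<r. w j) \<le> (\<Sum>j<r. u j)" .
  next
    fix j assume "j < n"
    then show "v (Suc j) \<le> v j"
      using abs_nth_abs_desc_order_antimono[of j "Suc j" n x]
      by (simp add: v_def \<sigma>_def abs_le_square_iff)
  qed (simp add: v_def)
  also have "\<dots> = (\<Sum>j\<in>{..<n} - {..<min m n}. 2 * p * (x (\<sigma> ! j))\<^sup>2)"
    by (rule sum.mono_neutral_cong_right) (auto simp: u_def v_def)
  also have "\<dots> = 2 * p * (\<Sum>j\<in>{..<n} - {..<min m n}. (x (\<sigma> ! j))\<^sup>2)"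
    by (rule sum_distrib_left[symmetric])
  also have "\<dots> = 2 * p * (\<Sum>i\<in>{..<n} - leading_coords n x m. (x i)\<^sup>2)"
    unfolding leading_coords_eq_image \<sigma>_def by (subst sum_compl_image_abs_desc_order) auto
  also have "\<dots> \<le> 2 * p * (l2norm n (drop_top n m x))\<^sup>2"
    unfolding l2norm_drop_top_sq
    using p is_top_set_top_set[of n m x]
    by (intro mult_left_mono sum_sq_compl_top_set_le[OF is_top_set_leading_coords])
       (auto simp: is_top_set_def)
  finally show ?thesis
    unfolding y_def .
qed

section \<open>Chernoff bound for the number of kept coordinates\<close>

lemma two_pow_card_kept_eq_prod:
  fixes A :: "nat set"
  assumes "A \<subseteq> {..<n}"
  shows "(2::real) ^ card {i \<in> A. S i} = (\<Prod>i<n. if i \<in> A \<and> S i then 2 else 1)"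
proof -
  have "(\<Prod>i<n. if i \<in> A \<and> S i then 2 else 1) = (\<Prod>i\<in>{i \<in> {..<n}. i \<in> A \<and> S i}. 2::real)"
    by (subst prod.inter_filter) auto
  also have "{i \<in> {..<n}. i \<in> A \<and> S i} = {i \<in> A. S i}"
    using assms by auto
  finally show ?thesis
    by simp
qed

lemma
  assumes A: "A \<subseteq> {..<n}" and p: "0 \<le> p" "p \<le> 1"
  shows integrable_two_pow_card_kept:
      "integrable (subsample_mask n p) (\<lambda>S. (2::real) ^ card {i \<in> A. S i})"
    and expectation_two_pow_card_kept:
      "measure_pmf.expectation (subsample_mask n p) (\<lambda>S. (2::real) ^ card {i \<in> A. S i})
         = (1 + p) ^ card A"
proof -
  define f :: "nat \<Rightarrow> bool \<Rightarrow> real" where "f i b = (if i \<in> A \<and> b then 2 else 1)" for i b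
  have eq: "(\<lambda>S. (2::real) ^ card {i \<in> A. S i}) = (\<lambda>S. \<Prod>i<n. f i (S i))"
    using two_pow_card_kept_eq_prod[OF A] by (simp add: f_def)
  have fin: "finite (set_pmf (bernoulli_pmf p))"
    by (rule finite_subset[of _ UNIV]) auto
  show "integrable (subsample_mask n p) (\<lambda>S. (2::real) ^ card {i \<in> A. S i})"
    unfolding eq subsample_mask_def
    by (rule integrable_prod_Pi_pmf) (auto intro: integrable_measure_pmf_finite[OF fin])
  have "measure_pmf.expectation (subsample_mask n p) (\<lambda>S. \<Prod>i<n. f i (S i))
          = (\<Prod>i<n. measure_pmf.expectation (bernoulli_pmf p) (f i))"
    unfolding subsample_mask_def
    by (rule expectation_prod_Pi_pmf) (auto intro: integrable_measure_pmf_finite[OF fin] simp: f_def)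
  also have "\<dots> = (\<Prod>i<n. if i \<in> A then 1 + p else 1)"
    using p by (intro prod.cong) (auto simp: f_def)
  also have "\<dots> = (1 + p) ^ card A"
    using A by (simp add: prod.If_cases Int_absorb1)
  finally show "measure_pmf.expectation (subsample_mask n p) (\<lambda>S. (2::real) ^ card {i \<in> A. S i})
         = (1 + p) ^ card A"
    unfolding eq .
qed

lemma prob_card_kept_ge_le:
  assumes A: "A \<subseteq> {..<n}" and p: "0 \<le> p" "p \<le> 1"
  shows "measure_pmf.prob (subsample_mask n p) {S. t \<le> real (card {i \<in> A. S i})}
           \<le> exp (p * card A - t * ln 2)"
proof -
  let ?M = "measure_pmf (subsample_mask n p)" and ?u = "\<lambda>S. (2::real) ^ card {i \<in> A. S i}"
  have "{S. t \<le> real (card {i \<in> A. S i})} \<subseteq> {S \<in> space ?M. 2 powr t \<le> ?u S}"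
    by (auto simp: powr_realpow[symmetric])
  then have "measure_pmf.prob (subsample_mask n p) {S. t \<le> real (card {i \<in> A. S i})}
               \<le> measure ?M {S \<in> space ?M. 2 powr t \<le> ?u S}"
    by (intro measure_pmf.finite_measure_mono) auto
  also have "\<dots> \<le> measure_pmf.expectation (subsample_mask n p) ?u / 2 powr t"
    by (rule integral_Markov_inequality_measure[OF integrable_two_pow_card_kept[OF A p]]) auto
  also have "\<dots> = (1 + p) ^ card A / 2 powr t"
    by (simp only: expectation_two_pow_card_kept[OF A p])
  also have "\<dots> \<le> exp p ^ card A / 2 powr t"
    using p by (intro divide_right_mono power_mono) auto
  also have "\<dots> = exp (p * card A - t * ln 2)"
    by (simp add: powr_def exp_diff exp_of_nat_mult[symmetric] mult.commute)
  finally show ?thesis .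
qed

lemma prob_block_count_exceeds_le:
  assumes p: "0 \<le> p" "p \<le> 1"
    and m: "p * real m \<le> real k + 1"
    and L: "real k / 6 \<le> p * real L" "p * real L \<le> real k / 6 + 1"
  shows "measure_pmf.prob (subsample_mask n p)
           {S. real (2 * k) + 2 * p * real (J * L) < real (kept_count n x S (m + (J + 1) * L))}
         \<le> exp (2 - real k / 6) * exp (- real k / 18) ^ J"
proof -
  define A where "A = leading_coords n x (m + (J + 1) * L)"
  define t where "t = real (2 * k) + 2 * p * real (J * L)"
  have t_eq: "t = 2 * real k + 2 * (real J * (p * real L))"
    by (simp add: t_def algebra_simps)
  have "measure_pmf.prob (subsample_mask n p)
          {S. t < real (kept_count n x S (m + (J + 1) * L))}
        \<le> measure_pmf.prob (subsample_mask n p) {S. t \<le> real (card {i \<in> A. S i})}"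
    by (intro measure_pmf.finite_measure_mono) (auto simp: kept_count_def A_def)
  also have "\<dots> \<le> exp (p * card A - t * ln 2)"
    using p leading_coords_subset by (intro prob_card_kept_ge_le) (auto simp: A_def)
  also have "\<dots> \<le> exp (2 - real k / 6 + real J * (- real k / 18))"
  proof (intro exp_mono)
    have "real (card A) \<le> real (m + (J + 1) * L)"
      unfolding of_nat_le_iff by (simp add: A_def card_leading_coords)
    then have "real (card A) \<le> real m + real J * real L + real L"
      by (simp add: algebra_simps)
    from mult_left_mono[OF this p(1)]
    have "p * card A \<le> p * real m + real J * (p * real L) + p * real L"
      by (simp add: algebra_simps)
    moreover have "t * (2 / 3) \<le> t * ln 2"
      using t_eq p L ln2_ge_two_thirds by (intro mult_left_mono) auto
    moreover have "real J * (real k / 6) \<le> real J * (p * real L)"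
      using L by (intro mult_left_mono) auto
    ultimately show "p * card A - t * ln 2 \<le> 2 - real k / 6 + real J * (- real k / 18)"
      using t_eq m L by (simp add: algebra_simps)
  qed
  also have "\<dots> = exp (2 - real k / 6) * exp (- real k / 18) ^ J"
    by (simp only: exp_add exp_of_nat_mult)
  finally show ?thesis
    unfolding t_def .
qed

lemma drop_top_subsample_bad_subset_block_events:
  assumes p: "0 \<le> p" and L: "0 < L" "1 \<le> 6 * (p * real L)"
  shows "{S. \<not> l2norm n (drop_top n K (apply_mask S x)) \<le> sqrt (2 * p) * l2norm n (drop_top n m x)}
           \<subseteq> (\<Union>J<3 * n. {S. real K + 2 * p * real (J * L) < real (kept_count n x S (m + (J + 1) * L))})"
proof
  fix S
  assume bad: "S \<in> {S. \<not> l2norm n (drop_top n K (apply_mask S x)) \<le> sqrt (2 * p) * l2norm n (drop_top n m x)}"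
  show "S \<in> (\<Union>J<3 * n. {S. real K + 2 * p * real (J * L) < real (kept_count n x S (m + (J + 1) * L))})"
  proof (rule ccontr)
    assume good: "S \<notin> (\<Union>J<3 * n. {S. real K + 2 * p * real (J * L) < real (kept_count n x S (m + (J + 1) * L))})"
    have "real (kept_count n x S (m + (J + 1) * L)) \<le> real K + 2 * p * real (J * L)" for J
    proof (cases "J < 3 * n")
      case False
      have "real (kept_count n x S (m + (J + 1) * L)) \<le> real n"
        using kept_count_le by simp
      also have "\<dots> \<le> real J / 3"
        using False by simp
      also have "\<dots> \<le> 2 * p * real (J * L)"
        using mult_left_mono[OF L(2), of "real J"] by (simp add: algebra_simps)
      finally show ?thesis
        by simp
    next
      case True
      with good show ?thesis
        by (auto simp: not_less)
    qed
    then have "real (kept_count n x S r - K) \<le> 2 * p * real (r - m)" for r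
      using p by (intro excess_le_if_le_at_block_ends[OF kept_count_mono L(1)]) auto
    then have "(l2norm n (drop_top n K (apply_mask S x)))\<^sup>2 \<le> 2 * p * (l2norm n (drop_top n m x))\<^sup>2"
      by (rule l2norm_drop_top_apply_mask_sq_le[OF p])
    then have "l2norm n (drop_top n K (apply_mask S x)) \<le> sqrt (2 * p * (l2norm n (drop_top n m x))\<^sup>2)"
      by (rule real_le_rsqrt)
    with bad show False
      by (simp add: real_sqrt_mult l2norm_nonneg)
  qed
qed

lemma prob_drop_top_subsample_gt_le:
  assumes k: "1 \<le> k" and p: "0 < p" "p \<le> 1"
  shows "measure_pmf.prob (subsample_mask n p)
           {S. \<not> l2norm n (drop_top n (2 * k) (apply_mask S x))
                   \<le> sqrt (2 * p) * l2norm n (drop_top n (nat \<lceil>real k / p\<rceil>) x)}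
         \<le> exp 2 / (1 - exp (- 1 / 18)) * exp (- (1 / 6) * real k)"
proof -
  define m where "m = nat \<lceil>real k / p\<rceil>"
  define L where "L = nat \<lceil>(real k / 6) / p\<rceil>"
  define q where "q = exp (- real k / 18)"
  have m: "p * real m \<le> real k + 1"
    using mult_nat_ceiling_divide_bounds(2)[OF p, of "real k"] by (simp add: m_def)
  have L: "real k / 6 \<le> p * real L" "p * real L \<le> real k / 6 + 1"
    using mult_nat_ceiling_divide_bounds[OF p, of "real k / 6"] by (simp_all add: L_def)
  have "0 < L"
    using L(1) k by (cases L) auto
  have q: "0 \<le> q" "q \<le> exp (- 1 / 18)" "q < 1"
    using k by (simp_all add: q_def)
  have "measure_pmf.prob (subsample_mask n p)
          {S. \<not> l2norm n (drop_top n (2 * k) (apply_mask S x)) \<le> sqrt (2 * p) * l2norm n (drop_top n m x)}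
        \<le> measure_pmf.prob (subsample_mask n p)
          (\<Union>J<3 * n. {S. real (2 * k) + 2 * p * real (J * L) < real (kept_count n x S (m + (J + 1) * L))})"
    using p \<open>0 < L\<close> L(1) k
    by (intro measure_pmf.finite_measure_mono drop_top_subsample_bad_subset_block_events) auto
  also have "\<dots> \<le> (\<Sum>J<3 * n. measure_pmf.prob (subsample_mask n p)
          {S. real (2 * k) + 2 * p * real (J * L) < real (kept_count n x S (m + (J + 1) * L))})"
    by (rule measure_pmf.finite_measure_subadditive_finite) auto
  also have "\<dots> \<le> (\<Sum>J<3 * n. exp (2 - real k / 6) * q ^ J)"
    unfolding q_def using p m L by (intro sum_mono prob_block_count_exceeds_le) auto
  also have "\<dots> = exp (2 - real k / 6) * (\<Sum>J<3 * n. q ^ J)"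
    by (rule sum_distrib_left[symmetric])
  also have "\<dots> \<le> exp (2 - real k / 6) * (1 / (1 - exp (- 1 / 18)))"
  proof (intro mult_left_mono)
    have "(\<Sum>J<3 * n. q ^ J) \<le> (\<Sum>J. q ^ J)"
      using q by (intro sum_le_suminf summable_geometric) auto
    also have "\<dots> = 1 / (1 - q)"
      using q by (simp add: suminf_geometric)
    also have "\<dots> \<le> 1 / (1 - exp (- 1 / 18))"
      using q by (intro divide_left_mono mult_pos_pos) auto
    finally show "(\<Sum>J<3 * n. q ^ J) \<le> 1 / (1 - exp (- 1 / 18))" .
  qed simp
  also have "\<dots> = exp 2 / (1 - exp (- 1 / 18)) * exp (- (1 / 6) * real k)"
    by (simp add: exp_add[symmetric])
  finally show ?thesis
    unfolding m_def .
qed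

theorem lemma1:
  "\<exists>C c. C > 0 \<and> c > 0 \<and>
     (\<forall>(n::nat) (x::nat \<Rightarrow> real) (k::nat) (p::real).
        k \<ge> 1 \<longrightarrow> 0 < p \<longrightarrow> p \<le> 1 \<longrightarrow>
        measure_pmf.prob (subsample_mask n p)
          {S. \<not> (l2norm n (drop_top n (2 * k) (apply_mask S x))
                  \<le> sqrt (2 * p) * l2norm n (drop_top n (nat \<lceil>real k / p\<rceil>) x))}
        \<le> C * exp (- c * real k))"
proof -
  have "0 < exp 2 / (1 - exp (- 1 / 18 :: real))"
    by simp
  then show ?thesis
    using prob_drop_top_subsample_gt_le
    by (intro exI[of _ "exp 2 / (1 - exp (- 1 / 18 :: real))"] exI[of _ "1 / 6"]) auto
qed

end
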